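(* Let $\nu\in S^{d-1}$, let $c_1,c_2:\mathbb R^{d+1}\to\mathbb R$ be continuous and uniformly bounded, $\xi:\mathbb R^{d+1}\to S^{d-1}$ a continuous vector field, and $C_0>c_0>0$. There exist constants $c,C>0$, depending only on $\lambda,\Lambda,d,c_0,C_0$ and the bounds of $c_1,c_2$, such that: if $\epsilon>0$, $L>R>0$ with $L\epsilon\le c$, and $w$ is a viscosity solution of $$\partial_tw-\mathcal P^+(D^2w)-(\epsilon c_1+\epsilon^3c_2t)\,\xi\cdot Dw\le0\ \text{in }Q_L,\qquad w\le c_0\ \text{on }\overline{Q_L}\cap\partial P_\nu,\qquad w\le C_0\ \text{on }\overline{Q_L},$$ then $w(x,t)\le c_0+C\frac{R}{L}$ for $(x,t)\in Q_R$.
   Context: $P_\nu=\{(x,t)\in\mathbb R^d\times\mathbb R:x\cdot\nu\ge0\}$; with $x_\nu=x\cdot\nu$, $x'=x-x_\nu\nu$, $Q_L=\{(x,t):0<x_\nu<L,|t|<L^2,|x'|<L\}$. $\mathcal P^+(M)=\Lambda\,\mathrm{Tr}M_+-\lambda\,\mathrm{Tr}M_-$ ($0<\lambda<\Lambda$) is Pucci's maximal operator. *)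

theory Defs
  imports "HOL-Analysis.Analysis"
begin

definition outer :: "real^'n \<Rightarrow> real^'n^'n" where
  "outer b = (\<chi> i j. b $ i * b $ j)"

definition orth_eigenbasis :: "real^'n^'n \<Rightarrow> (real^'n) set \<Rightarrow> bool" where
  "orth_eigenbasis M B \<longleftrightarrow> finite B \<and> card B = CARD('n) \<and>
     (\<forall>b\<in>B. norm b = 1 \<and> (\<exists>\<mu>::real. M *v b = \<mu> *\<^sub>R b)) \<and>
     (\<forall>b\<in>B. \<forall>b'\<in>B. b \<noteq> b' \<longrightarrow> b \<bullet> b' = 0)"

definition pos_part :: "real^'n^'n \<Rightarrow> real^'n^'n" where
  "pos_part M = (SOME P. \<exists>B. orth_eigenbasis M B \<and>
      P = (\<Sum>b\<in>B. max (b \<bullet> (M *v b)) 0 *\<^sub>R outer b))"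

definition neg_part :: "real^'n^'n \<Rightarrow> real^'n^'n" where
  "neg_part M = pos_part M - M"

definition pucci_max :: "real \<Rightarrow> real \<Rightarrow> real^'n^'n \<Rightarrow> real" where
  "pucci_max lam Lam M = Lam * trace (pos_part M) - lam * trace (neg_part M)"

definition cylQ :: "real^'n \<Rightarrow> real \<Rightarrow> ((real^'n) \<times> real) set" where
  "cylQ \<nu> L = {(x,t). 0 < x \<bullet> \<nu> \<and> x \<bullet> \<nu> < L \<and> \<bar>t\<bar> < L^2 \<and>
                       norm (x - (x \<bullet> \<nu>) *\<^sub>R \<nu>) < L}"

definition halfspace_bdry :: "real^'n \<Rightarrow> ((real^'n) \<times> real) set" where
  "halfspace_bdry \<nu> = {(x,t). x \<bullet> \<nu> = 0}"

(* viscosity subsolution of  w_t - P^+(D^2 w) - b(x,t).Dw <= 0  in the open set Q,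
   formulated via parabolic second order superjets (Crandall-Ishii-Lions) *)
definition visc_sub :: "real \<Rightarrow> real \<Rightarrow> (real^'n \<Rightarrow> real \<Rightarrow> real^'n)
     \<Rightarrow> (real^'n \<Rightarrow> real \<Rightarrow> real) \<Rightarrow> ((real^'n) \<times> real) set \<Rightarrow> bool" where
  "visc_sub lam Lam b w Q \<longleftrightarrow>
     (\<forall>x0 t0 q p X. (x0,t0) \<in> Q \<and> transpose X = X \<and>
        (\<forall>e>0. \<exists>\<delta>>0. \<forall>x t. (x,t) \<in> Q \<and> norm (x - x0) < \<delta> \<and> \<bar>t - t0\<bar> < \<delta> \<longrightarrow>
            w x t \<le> w x0 t0 + q * (t - t0) + p \<bullet> (x - x0)
                      + (1/2) * ((x - x0) \<bullet> (X *v (x - x0)))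
                      + e * (\<bar>t - t0\<bar> + (norm (x - x0))^2))
      \<longrightarrow> q - pucci_max lam Lam X - b x0 t0 \<bullet> p \<le> 0)"

end

theory Submission
  imports Defs
begin

(* Comparison with an explicit barrier. In the variables s = x.nu/L, y = x'/L, tau = t/L^2 put
     phi = c0 + M s + mu/2 s (1 - s) + M (|y|^2 + tau^2),   M = C0 - c0.
   Then phi >= c0 on the flat face of Q_L and phi >= C0 on the rest of its boundary, so phi >= w
   there. Its concavity -mu/L^2 in the normal direction beats the tangential diffusion
   2 Lambda (d - 1) M/L^2 and the time derivative once mu is large, and beats the drift once
   L eps is small; hence phi is a strict classical supersolution, and a subsolution cannot exceed
   it at an interior maximum of w - phi. Finally phi <= c0 + (3 M + mu/2) R/L on Q_R. *)

lemma outer_mult_vec: "outer b *v d = (b \<bullet> d) *\<^sub>R b"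
  by (simp add: vec_eq_iff matrix_vector_mult_def outer_def inner_vec_def sum_distrib_left mult_ac)

lemma trace_outer: "trace (outer b) = b \<bullet> b"
  by (simp add: trace_def outer_def inner_vec_def)

lemma trace_scaleR: "trace (c *\<^sub>R (A::real^'n^'n)) = c * trace A"
  by (simp add: trace_def sum_distrib_left)

lemma trace_sum: "trace (\<Sum>b\<in>B. f b :: real^'n^'n) = (\<Sum>b\<in>B. trace (f b))"
  by (simp add: trace_def sum.swap[of _ B])

lemma sum_inner_square_orthonormal_basis:
  fixes x :: "'a::euclidean_space"
  assumes "pairwise orthogonal B" "\<And>b. b \<in> B \<Longrightarrow> norm b = 1" "finite B" "card B = DIM('a)"
  shows "(\<Sum>b\<in>B. (x \<bullet> b)\<^sup>2) = x \<bullet> x"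
proof -
  have "0 \<notin> B" using assms(2) by force
  with assms(1) have "independent B" by (rule pairwise_orthogonal_independent)
  then have "span B = UNIV"
    using card_eq_dim[of B UNIV] assms(3,4) by (auto simp: dim_UNIV)
  then have "x = (\<Sum>b\<in>B. (x \<bullet> b) *\<^sub>R b)"
    using orthonormal_basis_expand[OF assms(1,2) _ assms(3)] by simp
  then have "x \<bullet> x = x \<bullet> (\<Sum>b\<in>B. (x \<bullet> b) *\<^sub>R b)" by simp
  also have "\<dots> = (\<Sum>b\<in>B. (x \<bullet> b)\<^sup>2)" by (simp add: inner_sum_right power2_eq_square)
  finally show ?thesis by simp
qed

lemma orth_eigenbasis_pairwise_orthogonal:
  "orth_eigenbasis M B \<Longrightarrow> pairwise orthogonal B"
  by (auto simp: orth_eigenbasis_def pairwise_def orthogonal_def)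

lemma trace_pos_part:
  assumes "orth_eigenbasis M B0"
  obtains B where "orth_eigenbasis M B" "trace (pos_part M) = (\<Sum>b\<in>B. max (b \<bullet> (M *v b)) 0)"
proof -
  have "\<exists>P B. orth_eigenbasis M B \<and> P = (\<Sum>b\<in>B. max (b \<bullet> (M *v b)) 0 *\<^sub>R outer b)"
    using assms by blast
  from someI_ex[OF this] obtain B where B: "orth_eigenbasis M B"
    and P: "pos_part M = (\<Sum>b\<in>B. max (b \<bullet> (M *v b)) 0 *\<^sub>R outer b)"
    unfolding pos_part_def by blast
  have "b \<bullet> b = 1" if "b \<in> B" for b
    using B that by (simp add: orth_eigenbasis_def norm_eq_1)
  then have "trace (pos_part M) = (\<Sum>b\<in>B. max (b \<bullet> (M *v b)) 0)"
    by (simp add: P trace_sum trace_scaleR trace_outer)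
  with B show thesis by (rule that)
qed

lemma pucci_max_eq_trace:
  "pucci_max lam Lam M = (Lam - lam) * trace (pos_part M) + lam * trace M"
  by (simp add: pucci_max_def neg_part_def trace_sub algebra_simps)

definition axial_matrix :: "real^'n \<Rightarrow> real \<Rightarrow> real \<Rightarrow> real^'n^'n" where
  "axial_matrix \<nu> a k = a *\<^sub>R outer \<nu> + k *\<^sub>R (mat 1 - outer \<nu>)"

lemma axial_matrix_mult_vec:
  "axial_matrix \<nu> a k *v d = (a * (\<nu> \<bullet> d)) *\<^sub>R \<nu> + k *\<^sub>R (d - (\<nu> \<bullet> d) *\<^sub>R \<nu>)"
proof -
  have "axial_matrix \<nu> a k *v d = a *\<^sub>R (outer \<nu> *v d) + k *\<^sub>R (d - outer \<nu> *v d)"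
    by (simp add: axial_matrix_def matrix_vector_mult_add_rdistrib matrix_vector_mult_diff_rdistrib
        flip: scaleR_matrix_vector_assoc)
  then show ?thesis by (simp add: outer_mult_vec algebra_simps)
qed

lemma inner_axial_matrix:
  "d \<bullet> (axial_matrix \<nu> a k *v d) = a * (\<nu> \<bullet> d)\<^sup>2 + k * (d \<bullet> d - (\<nu> \<bullet> d)\<^sup>2)"
  by (simp add: axial_matrix_mult_vec inner_diff_right inner_commute power2_eq_square algebra_simps)

lemma transpose_axial_matrix: "transpose (axial_matrix \<nu> a k) = axial_matrix \<nu> a k"
  by (simp add: vec_eq_iff transpose_def axial_matrix_def outer_def mat_def)

lemma trace_axial_matrix:
  "norm \<nu> = 1 \<Longrightarrow> trace (axial_matrix (\<nu>::real^'n) a k) = a + k * (CARD('n) - 1)"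
  by (simp add: axial_matrix_def trace_add trace_sub trace_scaleR trace_outer trace_I norm_eq_1)

lemma orth_eigenbasis_axial_matrix:
  fixes \<nu> :: "real^'n"
  assumes "norm \<nu> = 1"
  shows "\<exists>B. orth_eigenbasis (axial_matrix \<nu> a k) B"
proof -
  obtain S where S: "\<nu> \<in> S" "pairwise orthogonal S" "\<And>x. x \<in> S \<Longrightarrow> norm x = 1"
    "independent S" "card S = DIM(real^'n)"
    using vector_in_orthonormal_basis[OF assms] by metis
  have "\<exists>\<mu>. axial_matrix \<nu> a k *v b = \<mu> *\<^sub>R b" if "b \<in> S" for b
  proof (cases "b = \<nu>")
    case True
    then show ?thesis using assms by (auto simp: axial_matrix_mult_vec norm_eq_1)
  next
    case False
    then have "\<nu> \<bullet> b = 0" using S(1,2) that by (auto simp: pairwise_def orthogonal_def)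
    then show ?thesis by (auto simp: axial_matrix_mult_vec)
  qed
  then have "orth_eigenbasis (axial_matrix \<nu> a k) S"
    using S independent_imp_finite by (auto simp: orth_eigenbasis_def pairwise_def orthogonal_def)
  then show ?thesis by blast
qed

lemma trace_pos_part_axial_matrix_le:
  fixes \<nu> :: "real^'n"
  assumes "norm \<nu> = 1" "a \<le> 0" "0 \<le> k"
  shows "trace (pos_part (axial_matrix \<nu> a k)) \<le> (real CARD('n) - 1) * k"
proof -
  obtain B where B: "orth_eigenbasis (axial_matrix \<nu> a k) B"
    and tr: "trace (pos_part (axial_matrix \<nu> a k)) = (\<Sum>b\<in>B. max (b \<bullet> (axial_matrix \<nu> a k *v b)) 0)"
    using orth_eigenbasis_axial_matrix[OF assms(1)] trace_pos_part by metis
  have fin: "finite B" and card: "card B = CARD('n)" and unit: "\<And>b. b \<in> B \<Longrightarrow> norm b = 1"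
    using B by (auto simp: orth_eigenbasis_def)
  \<comment> \<open>Whichever eigenbasis pos_part has chosen, Parseval gives the sum of the (nu.b)^2 as 1.\<close>
  have "max (b \<bullet> (axial_matrix \<nu> a k *v b)) 0 \<le> k * (1 - (\<nu> \<bullet> b)\<^sup>2)" if "b \<in> B" for b
  proof -
    have "\<bar>\<nu> \<bullet> b\<bar> \<le> 1"
      using Cauchy_Schwarz_ineq2[of \<nu> b] assms(1) unit[OF that] by simp
    then have "(\<nu> \<bullet> b)\<^sup>2 \<le> 1" by (simp add: abs_square_le_1)
    then show ?thesis
      using assms(2,3) unit[OF that] by (simp add: inner_axial_matrix mult_nonpos_nonneg norm_eq_1)
  qed
  then have "trace (pos_part (axial_matrix \<nu> a k)) \<le> (\<Sum>b\<in>B. k * (1 - (\<nu> \<bullet> b)\<^sup>2))"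
    unfolding tr by (rule sum_mono)
  also have "\<dots> = k * (card B - \<nu> \<bullet> \<nu>)"
    using sum_inner_square_orthonormal_basis[OF orth_eigenbasis_pairwise_orthogonal[OF B] unit fin, of \<nu>] card
    by (simp add: sum_subtractf right_diff_distrib flip: sum_distrib_left)
  finally show ?thesis using assms(1) card by (simp add: norm_eq_1 mult.commute)
qed

lemma pucci_max_axial_matrix_le:
  fixes \<nu> :: "real^'n"
  assumes "norm \<nu> = 1" "a \<le> 0" "0 \<le> k" "lam \<le> Lam"
  shows "pucci_max lam Lam (axial_matrix \<nu> a k) \<le> Lam * (real CARD('n) - 1) * k + lam * a"
proof -
  have "pucci_max lam Lam (axial_matrix \<nu> a k) \<le> (Lam - lam) * ((real CARD('n) - 1) * k) + lam * (a + k * (CARD('n) - 1))"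
    unfolding pucci_max_eq_trace trace_axial_matrix[OF assms(1)]
    using trace_pos_part_axial_matrix_le[OF assms(1-3)] assms(4) by (intro add_right_mono mult_left_mono) auto
  then show ?thesis by (simp add: algebra_simps)
qed

definition parabolic_superjet :: "(real^'n \<Rightarrow> real \<Rightarrow> real) \<Rightarrow> ((real^'n) \<times> real) set
    \<Rightarrow> real^'n \<Rightarrow> real \<Rightarrow> real \<Rightarrow> real^'n \<Rightarrow> real^'n^'n \<Rightarrow> bool" where
  "parabolic_superjet u Q x0 t0 q p X \<longleftrightarrow>
     (\<forall>e>0. \<exists>\<delta>>0. \<forall>x t. (x,t) \<in> Q \<and> norm (x - x0) < \<delta> \<and> \<bar>t - t0\<bar> < \<delta> \<longrightarrow>
        u x t \<le> u x0 t0 + q * (t - t0) + p \<bullet> (x - x0)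
                  + (1/2) * ((x - x0) \<bullet> (X *v (x - x0)))
                  + e * (\<bar>t - t0\<bar> + (norm (x - x0))\<^sup>2))"

lemma visc_subD:
  assumes "visc_sub lam Lam b w Q" "(x0,t0) \<in> Q" "transpose X = X"
    and "parabolic_superjet w Q x0 t0 q p X"
  shows "q - pucci_max lam Lam X - b x0 t0 \<bullet> p \<le> 0"
  using assms unfolding visc_sub_def parabolic_superjet_def by blast

lemma parabolic_superjet_touching_above:
  assumes "parabolic_superjet \<phi> Q x0 t0 q p X"
    and "\<And>x t. (x,t) \<in> Q \<Longrightarrow> w x t - w x0 t0 \<le> \<phi> x t - \<phi> x0 t0"
  shows "parabolic_superjet w Q x0 t0 q p X"
  unfolding parabolic_superjet_def
proof (intro allI impI)
  fix e :: real assume "e > 0"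
  with assms(1) obtain \<delta> where "\<delta> > 0" and \<delta>: "\<And>x t. (x,t) \<in> Q \<and> norm (x - x0) < \<delta> \<and> \<bar>t - t0\<bar> < \<delta> \<Longrightarrow>
        \<phi> x t \<le> \<phi> x0 t0 + q * (t - t0) + p \<bullet> (x - x0)
                  + (1/2) * ((x - x0) \<bullet> (X *v (x - x0))) + e * (\<bar>t - t0\<bar> + (norm (x - x0))\<^sup>2)"
    unfolding parabolic_superjet_def by blast
  show "\<exists>\<delta>>0. \<forall>x t. (x,t) \<in> Q \<and> norm (x - x0) < \<delta> \<and> \<bar>t - t0\<bar> < \<delta> \<longrightarrow>
        w x t \<le> w x0 t0 + q * (t - t0) + p \<bullet> (x - x0)
                  + (1/2) * ((x - x0) \<bullet> (X *v (x - x0))) + e * (\<bar>t - t0\<bar> + (norm (x - x0))\<^sup>2)"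
  proof (intro exI allI impI conjI)
    fix x t assume near: "(x,t) \<in> Q \<and> norm (x - x0) < \<delta> \<and> \<bar>t - t0\<bar> < \<delta>"
    with assms(2) have "w x t - w x0 t0 \<le> \<phi> x t - \<phi> x0 t0" by blast
    with \<delta>[OF near] show "w x t \<le> w x0 t0 + q * (t - t0) + p \<bullet> (x - x0)
                  + (1/2) * ((x - x0) \<bullet> (X *v (x - x0))) + e * (\<bar>t - t0\<bar> + (norm (x - x0))\<^sup>2)"
      by linarith
  qed (rule \<open>\<delta> > 0\<close>)
qed

lemma parabolic_superjet_of_expansion:
  assumes expand: "\<And>x t. u x t - u x0 t0 = q * (t - t0) + p \<bullet> (x - x0)
                  + (1/2) * ((x - x0) \<bullet> (X *v (x - x0))) + m * (t - t0)\<^sup>2"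
    and "0 \<le> m"
  shows "parabolic_superjet u Q x0 t0 q p X"
  unfolding parabolic_superjet_def
proof (intro allI impI exI conjI)
  fix e :: real assume e: "e > 0"
  show "e / (m + 1) > 0" using e \<open>0 \<le> m\<close> by simp
  fix x t assume "(x,t) \<in> Q \<and> norm (x - x0) < e / (m + 1) \<and> \<bar>t - t0\<bar> < e / (m + 1)"
  then have "(m + 1) * \<bar>t - t0\<bar> \<le> e" using \<open>0 \<le> m\<close> by (simp add: field_simps)
  then have "m * \<bar>t - t0\<bar> + \<bar>t - t0\<bar> \<le> e" by (simp add: distrib_right)
  then have "m * \<bar>t - t0\<bar> \<le> e" by (simp add: add_increasing2)
  then have "m * \<bar>t - t0\<bar> * \<bar>t - t0\<bar> \<le> e * \<bar>t - t0\<bar>" by (rule mult_right_mono) simp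
  then have "m * (t - t0)\<^sup>2 \<le> e * \<bar>t - t0\<bar>" by (simp add: power2_eq_square abs_mult_self_eq mult.assoc)
  moreover have "0 \<le> e * (norm (x - x0))\<^sup>2" using e by simp
  ultimately show "u x t \<le> u x0 t0 + q * (t - t0) + p \<bullet> (x - x0)
                  + (1/2) * ((x - x0) \<bullet> (X *v (x - x0))) + e * (\<bar>t - t0\<bar> + (norm (x - x0))\<^sup>2)"
    using expand[of x t] by (simp add: distrib_left)
qed

lemma visc_sub_le_strict_supersolution:
  fixes w \<phi> :: "real^'n \<Rightarrow> real \<Rightarrow> real"
  assumes sub: "visc_sub lam Lam b w Q" and "bounded Q"
    and cont_w: "continuous_on (closure Q) (\<lambda>z. w (fst z) (snd z))"
    and cont_\<phi>: "continuous_on (closure Q) (\<lambda>z. \<phi> (fst z) (snd z))"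
    and boundary: "\<And>x t. (x,t) \<in> closure Q - Q \<Longrightarrow> w x t \<le> \<phi> x t"
    and strict: "\<And>x0 t0. (x0,t0) \<in> Q \<Longrightarrow> \<exists>q p X. transpose X = X \<and>
        parabolic_superjet \<phi> Q x0 t0 q p X \<and> 0 < q - pucci_max lam Lam X - b x0 t0 \<bullet> p"
    and "(x,t) \<in> Q"
  shows "w x t \<le> \<phi> x t"
proof (rule ccontr)
  assume "\<not> w x t \<le> \<phi> x t"
  let ?f = "\<lambda>z. w (fst z) (snd z) - \<phi> (fst z) (snd z)"
  have xt: "(x,t) \<in> closure Q" using \<open>(x,t) \<in> Q\<close> closure_subset by blast
  have "compact (closure Q)" using \<open>bounded Q\<close> by simp
  moreover have "closure Q \<noteq> {}" using xt by auto
  moreover have "continuous_on (closure Q) ?f" using cont_w cont_\<phi> by (rule continuous_on_diff)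
  ultimately obtain z0 where z0: "z0 \<in> closure Q" and max: "\<And>z. z \<in> closure Q \<Longrightarrow> ?f z \<le> ?f z0"
    by (meson continuous_attains_sup)
  obtain x0 t0 where z0_eq: "z0 = (x0,t0)" by fastforce
  have "?f (x,t) \<le> ?f z0" using max xt .
  with \<open>\<not> w x t \<le> \<phi> x t\<close> z0_eq have "\<phi> x0 t0 < w x0 t0" by simp
  with boundary z0 z0_eq have "(x0,t0) \<in> Q" by fastforce
  then obtain q p X where "transpose X = X" and jet: "parabolic_superjet \<phi> Q x0 t0 q p X"
    and gap: "0 < q - pucci_max lam Lam X - b x0 t0 \<bullet> p"
    using strict by blast
  have "parabolic_superjet w Q x0 t0 q p X"
    using jet by (rule parabolic_superjet_touching_above) (use max closure_subset z0_eq in fastforce)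
  with sub \<open>(x0,t0) \<in> Q\<close> \<open>transpose X = X\<close> have "q - pucci_max lam Lam X - b x0 t0 \<bullet> p \<le> 0"
    by (rule visc_subD)
  with gap show False by simp
qed

lemma norm_diff_projection_sq:
  assumes "norm \<nu> = 1"
  shows "(norm (x - (x \<bullet> \<nu>) *\<^sub>R \<nu>))\<^sup>2 = x \<bullet> x - (x \<bullet> \<nu>)\<^sup>2"
proof -
  have "(norm (x - (x \<bullet> \<nu>) *\<^sub>R \<nu>))\<^sup>2 = (x - (x \<bullet> \<nu>) *\<^sub>R \<nu>) \<bullet> (x - (x \<bullet> \<nu>) *\<^sub>R \<nu>)"
    by (rule power2_norm_eq_inner)
  also have "\<dots> = x \<bullet> x - (x \<bullet> \<nu>)\<^sup>2"
    using assms by (simp add: inner_diff_left inner_diff_right norm_eq_1 inner_commute power2_eq_square)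
  finally show ?thesis .
qed

lemma mem_cylQ:
  "(x,t) \<in> cylQ \<nu> L \<longleftrightarrow> 0 < x \<bullet> \<nu> \<and> x \<bullet> \<nu> < L \<and> \<bar>t\<bar> < L\<^sup>2 \<and> norm (x - (x \<bullet> \<nu>) *\<^sub>R \<nu>) < L"
  by (simp add: cylQ_def)

lemma cylQ_mono:
  assumes "0 \<le> R" "R \<le> L"
  shows "cylQ \<nu> R \<subseteq> cylQ \<nu> L"
proof -
  have "R\<^sup>2 \<le> L\<^sup>2" using assms by (simp add: power_mono)
  then have "\<And>t. \<bar>t\<bar> < R\<^sup>2 \<Longrightarrow> \<bar>t\<bar> < L\<^sup>2" by linarith
  with assms show ?thesis by (auto simp: cylQ_def)
qed

lemma closure_cylQ_subset:
  "closure (cylQ \<nu> L) \<subseteq> {(x,t). 0 \<le> x \<bullet> \<nu> \<and> x \<bullet> \<nu> \<le> L \<and> \<bar>t\<bar> \<le> L\<^sup>2 \<and> norm (x - (x \<bullet> \<nu>) *\<^sub>R \<nu>) \<le> L}"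
proof (rule closure_minimal)
  show "cylQ \<nu> L \<subseteq> {(x,t). 0 \<le> x \<bullet> \<nu> \<and> x \<bullet> \<nu> \<le> L \<and> \<bar>t\<bar> \<le> L\<^sup>2 \<and> norm (x - (x \<bullet> \<nu>) *\<^sub>R \<nu>) \<le> L}"
    by (auto simp: cylQ_def)
  have "closed {z. 0 \<le> fst z \<bullet> \<nu> \<and> fst z \<bullet> \<nu> \<le> L \<and> \<bar>snd z\<bar> \<le> L\<^sup>2
      \<and> norm (fst z - (fst z \<bullet> \<nu>) *\<^sub>R \<nu>) \<le> L}"
    by (intro closed_Collect_conj closed_Collect_le continuous_intros)
  then show "closed {(x,t). 0 \<le> x \<bullet> \<nu> \<and> x \<bullet> \<nu> \<le> L \<and> \<bar>t\<bar> \<le> L\<^sup>2 \<and> norm (x - (x \<bullet> \<nu>) *\<^sub>R \<nu>) \<le> L}"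
    by (simp add: case_prod_beta')
qed

lemma boundary_cylQ_cases:
  assumes "(x,t) \<in> closure (cylQ \<nu> L) - cylQ \<nu> L"
  shows "0 \<le> x \<bullet> \<nu>" "x \<bullet> \<nu> \<le> L" "\<bar>t\<bar> \<le> L\<^sup>2" "norm (x - (x \<bullet> \<nu>) *\<^sub>R \<nu>) \<le> L"
    and "x \<bullet> \<nu> = 0 \<or> x \<bullet> \<nu> = L \<or> \<bar>t\<bar> = L\<^sup>2 \<or> norm (x - (x \<bullet> \<nu>) *\<^sub>R \<nu>) = L"
  using assms closure_cylQ_subset[of \<nu> L] by (auto simp: mem_cylQ)

lemma bounded_cylQ: "bounded (cylQ (\<nu>::real^'n) L)"
proof -
  have "cylQ \<nu> L \<subseteq> cball 0 (norm \<nu> * L + L + L\<^sup>2)"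
  proof
    fix z assume "z \<in> cylQ \<nu> L"
    then obtain x t where z: "z = (x,t)" and bounds: "0 < x \<bullet> \<nu>" "x \<bullet> \<nu> < L" "\<bar>t\<bar> < L\<^sup>2"
      "norm (x - (x \<bullet> \<nu>) *\<^sub>R \<nu>) < L" by (auto simp: cylQ_def)
    have "norm x \<le> norm ((x \<bullet> \<nu>) *\<^sub>R \<nu>) + norm (x - (x \<bullet> \<nu>) *\<^sub>R \<nu>)"
      by (metis add.commute diff_add_cancel norm_triangle_ineq)
    also have "norm ((x \<bullet> \<nu>) *\<^sub>R \<nu>) \<le> L * norm \<nu>"
      using bounds by (simp add: mult_right_mono)
    finally have "norm x \<le> norm \<nu> * L + L" using bounds by (simp add: mult.commute)
    then show "z \<in> cball 0 (norm \<nu> * L + L + L\<^sup>2)"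
      using z bounds norm_Pair_le[of x t] by simp
  qed
  then show ?thesis using bounded_cball bounded_subset by blast
qed

definition barrier :: "real \<Rightarrow> real \<Rightarrow> real \<Rightarrow> real \<Rightarrow> real^'n \<Rightarrow> real^'n \<Rightarrow> real \<Rightarrow> real" where
  "barrier c0 M mu L \<nu> x t = c0 + (M + mu / 2) * (x \<bullet> \<nu> / L) - mu / 2 * (x \<bullet> \<nu> / L)\<^sup>2
     + M * (norm (x - (x \<bullet> \<nu>) *\<^sub>R \<nu>) / L)\<^sup>2 + M * (t / L\<^sup>2)\<^sup>2"

definition barrier_grad :: "real \<Rightarrow> real \<Rightarrow> real \<Rightarrow> real^'n \<Rightarrow> real^'n \<Rightarrow> real^'n" where
  "barrier_grad M mu L \<nu> x = ((M + mu / 2) / L - mu * (x \<bullet> \<nu>) / L\<^sup>2) *\<^sub>R \<nu>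
     + (2 * M / L\<^sup>2) *\<^sub>R (x - (x \<bullet> \<nu>) *\<^sub>R \<nu>)"

lemma barrier_expansion:
  assumes "norm \<nu> = 1" "L > 0"
  shows "barrier c0 M mu L \<nu> x t - barrier c0 M mu L \<nu> x0 t0 =
    (2 * M * t0 / L^4) * (t - t0) + barrier_grad M mu L \<nu> x0 \<bullet> (x - x0)
    + 1/2 * ((x - x0) \<bullet> (axial_matrix \<nu> (- mu / L\<^sup>2) (2 * M / L\<^sup>2) *v (x - x0)))
    + M / L^4 * (t - t0)\<^sup>2"
proof -
  define d where "d = x - x0"
  have x: "x = x0 + d" by (simp add: d_def)
  have "(norm (y - (y \<bullet> \<nu>) *\<^sub>R \<nu>) / L)\<^sup>2 = (y \<bullet> y - (y \<bullet> \<nu>)\<^sup>2) / L\<^sup>2" for y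
    by (simp add: power_divide norm_diff_projection_sq[OF assms(1)])
  note norms = this
  have "barrier c0 M mu L \<nu> x t - barrier c0 M mu L \<nu> x0 t0 =
      (M + mu / 2) * ((x0 \<bullet> \<nu> + d \<bullet> \<nu>) / L) - mu / 2 * ((x0 \<bullet> \<nu> + d \<bullet> \<nu>) / L)\<^sup>2
      + M * ((x0 \<bullet> x0 + 2 * (x0 \<bullet> d) + d \<bullet> d - (x0 \<bullet> \<nu> + d \<bullet> \<nu>)\<^sup>2) / L\<^sup>2) + M * (t / L\<^sup>2)\<^sup>2
      - ((M + mu / 2) * (x0 \<bullet> \<nu> / L) - mu / 2 * (x0 \<bullet> \<nu> / L)\<^sup>2
         + M * ((x0 \<bullet> x0 - (x0 \<bullet> \<nu>)\<^sup>2) / L\<^sup>2) + M * (t0 / L\<^sup>2)\<^sup>2)"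
    unfolding barrier_def norms by (simp add: x inner_add_left inner_add_right inner_commute)
  also have "\<dots> = (2 * M * t0 / L^4) * (t - t0) + barrier_grad M mu L \<nu> x0 \<bullet> d
      + 1/2 * (d \<bullet> (axial_matrix \<nu> (- mu / L\<^sup>2) (2 * M / L\<^sup>2) *v d)) + M / L^4 * (t - t0)\<^sup>2"
  proof -
    have grad: "barrier_grad M mu L \<nu> x0 \<bullet> d
        = ((M + mu / 2) / L - mu * (x0 \<bullet> \<nu>) / L\<^sup>2) * (\<nu> \<bullet> d) + (2 * M / L\<^sup>2) * (x0 \<bullet> d - (x0 \<bullet> \<nu>) * (\<nu> \<bullet> d))"
      by (simp add: barrier_grad_def inner_add_left inner_diff_left inner_add_right inner_diff_right
          inner_commute algebra_simps diff_divide_distrib)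
    show ?thesis
      unfolding grad inner_axial_matrix using assms(2)
      by (simp add: field_simps power2_eq_square power4_eq_xxxx inner_commute)
  qed
  finally show ?thesis by (simp add: d_def)
qed

lemma barrier_ge_paraboloid:
  assumes "0 \<le> mu" "0 < L" "0 \<le> x \<bullet> \<nu>" "x \<bullet> \<nu> \<le> L"
  shows "c0 + M * (x \<bullet> \<nu> / L) + M * (norm (x - (x \<bullet> \<nu>) *\<^sub>R \<nu>) / L)\<^sup>2 + M * (t / L\<^sup>2)\<^sup>2
    \<le> barrier c0 M mu L \<nu> x t"
proof -
  define s where "s = x \<bullet> \<nu> / L"
  have "0 \<le> s" "s \<le> 1" using assms by (simp_all add: s_def)
  then have "0 \<le> mu / 2 * (s * (1 - s))" using assms(1) by simp
  then show ?thesis by (simp add: barrier_def flip: s_def) (simp add: algebra_simps power2_eq_square)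
qed

lemma le_barrier_on_boundary:
  assumes "0 \<le> M" "0 \<le> mu" "0 < L" and boundary: "(x,t) \<in> closure (cylQ \<nu> L) - cylQ \<nu> L"
    and flat: "x \<bullet> \<nu> = 0 \<Longrightarrow> w x t \<le> c0" and "w x t \<le> c0 + M"
  shows "w x t \<le> barrier c0 M mu L \<nu> x t"
proof -
  let ?r = "norm (x - (x \<bullet> \<nu>) *\<^sub>R \<nu>)"
  note bounds = boundary_cylQ_cases[OF boundary]
  have ge: "c0 + M * (x \<bullet> \<nu> / L) + M * (?r / L)\<^sup>2 + M * (t / L\<^sup>2)\<^sup>2 \<le> barrier c0 M mu L \<nu> x t"
    using assms(2,3) bounds(1,2) by (rule barrier_ge_paraboloid)
  have nonneg: "0 \<le> M * (x \<bullet> \<nu> / L)" "0 \<le> M * (?r / L)\<^sup>2" "0 \<le> M * (t / L\<^sup>2)\<^sup>2"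
    using assms(1,3) bounds(1) by simp_all
  from bounds(5) show ?thesis
  proof (elim disjE)
    assume "x \<bullet> \<nu> = 0"
    with flat ge nonneg show ?thesis by linarith
  next
    assume "x \<bullet> \<nu> = L"
    then have "M * (x \<bullet> \<nu> / L) = M" using assms(3) by simp
    with assms(6) ge nonneg show ?thesis by linarith
  next
    assume "\<bar>t\<bar> = L\<^sup>2"
    then have "t\<^sup>2 = (L\<^sup>2)\<^sup>2" by (metis power2_abs)
    then have "M * (t / L\<^sup>2)\<^sup>2 = M" using assms(3) by (simp add: power_divide)
    with assms(6) ge nonneg show ?thesis by linarith
  next
    assume "?r = L"
    then have "M * (?r / L)\<^sup>2 = M" using assms(3) by simp
    with assms(6) ge nonneg show ?thesis by linarith
  qed
qed

lemma barrier_le_on_cylQ: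
  assumes "0 \<le> M" "0 \<le> mu" "0 < R" "R \<le> L" "(x,t) \<in> cylQ \<nu> R"
  shows "barrier c0 M mu L \<nu> x t \<le> c0 + (3 * M + mu / 2) * R / L"
proof -
  define r where "r = R / L"
  have r: "0 < r" "r \<le> 1" using assms(3,4) by (simp_all add: r_def)
  have in_R: "0 < x \<bullet> \<nu>" "x \<bullet> \<nu> < R" "\<bar>t\<bar> < R\<^sup>2" "norm (x - (x \<bullet> \<nu>) *\<^sub>R \<nu>) < R"
    using assms(5) by (simp_all add: mem_cylQ)
  have "x \<bullet> \<nu> / L \<le> r"
    using in_R assms(3,4) by (simp add: r_def divide_right_mono)
  then have normal: "(M + mu / 2) * (x \<bullet> \<nu> / L) \<le> (M + mu / 2) * r"
    by (rule mult_left_mono) (use assms(1,2) in simp)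
  have r_sq: "r\<^sup>2 \<le> r" using r by (simp add: power2_eq_square mult_left_le)
  have "norm (x - (x \<bullet> \<nu>) *\<^sub>R \<nu>) / L \<le> r"
    using in_R assms(3,4) by (simp add: r_def divide_right_mono)
  then have "(norm (x - (x \<bullet> \<nu>) *\<^sub>R \<nu>) / L)\<^sup>2 \<le> r\<^sup>2"
    using assms(3,4) by (intro power_mono) auto
  then have lateral: "M * (norm (x - (x \<bullet> \<nu>) *\<^sub>R \<nu>) / L)\<^sup>2 \<le> M * r"
    using assms(1) r_sq by (meson mult_left_mono order_trans)
  have "\<bar>t\<bar> / L\<^sup>2 \<le> r\<^sup>2"
    using in_R assms(3,4) by (simp add: r_def power_divide divide_right_mono)
  then have "(\<bar>t\<bar> / L\<^sup>2)\<^sup>2 \<le> (r\<^sup>2)\<^sup>2" by (intro power_mono) auto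
  also have "\<dots> \<le> r\<^sup>2" using r by (simp add: power2_eq_square mult_le_one mult_left_le)
  finally have "(t / L\<^sup>2)\<^sup>2 \<le> r" using r_sq by (simp add: power_divide)
  then have time: "M * (t / L\<^sup>2)\<^sup>2 \<le> M * r"
    using assms(1) by (rule mult_left_mono)
  have "0 \<le> mu / 2 * (x \<bullet> \<nu> / L)\<^sup>2" using assms(2) by simp
  then have "barrier c0 M mu L \<nu> x t \<le> c0 + (M + mu / 2) * r + M * r + M * r"
    using normal lateral time unfolding barrier_def by linarith
  also have "\<dots> = c0 + (3 * M + mu / 2) * R / L"
    using assms(3,4) by (simp add: r_def field_simps)
  finally show ?thesis .
qed

lemma norm_barrier_grad_le:
  assumes "norm \<nu> = 1" "0 \<le> M" "0 \<le> mu" "(x,t) \<in> cylQ \<nu> L"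
  shows "norm (barrier_grad M mu L \<nu> x) \<le> (3 * M + mu / 2) / L"
proof -
  have in_L: "0 < x \<bullet> \<nu>" "x \<bullet> \<nu> < L" "norm (x - (x \<bullet> \<nu>) *\<^sub>R \<nu>) < L"
    using assms(4) by (simp_all add: mem_cylQ)
  then have "0 < L" by simp
  have "\<bar>M + mu / 2 - mu * (x \<bullet> \<nu> / L)\<bar> \<le> M + mu / 2"
  proof -
    have "x \<bullet> \<nu> / L \<le> 1" using in_L by simp
    then have "mu * (x \<bullet> \<nu> / L) \<le> mu" using assms(3) by (rule mult_left_le)
    moreover have "0 \<le> mu * (x \<bullet> \<nu> / L)" using assms(3) in_L by simp
    ultimately
    show ?thesis using assms(2) by linarith
  qed
  moreover have "(M + mu / 2) / L - mu * (x \<bullet> \<nu>) / L\<^sup>2 = (M + mu / 2 - mu * (x \<bullet> \<nu> / L)) / L"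
    using \<open>0 < L\<close> by (simp add: field_simps power2_eq_square)
  ultimately have "\<bar>(M + mu / 2) / L - mu * (x \<bullet> \<nu>) / L\<^sup>2\<bar> \<le> (M + mu / 2) / L"
    using \<open>0 < L\<close> by (simp add: divide_right_mono)
  moreover have "2 * M / L\<^sup>2 * norm (x - (x \<bullet> \<nu>) *\<^sub>R \<nu>) \<le> 2 * M / L\<^sup>2 * L"
    using in_L assms(2) by (intro mult_left_mono) auto
  moreover have "norm (barrier_grad M mu L \<nu> x) \<le> \<bar>(M + mu / 2) / L - mu * (x \<bullet> \<nu>) / L\<^sup>2\<bar>
      + 2 * M / L\<^sup>2 * norm (x - (x \<bullet> \<nu>) *\<^sub>R \<nu>)"
    unfolding barrier_grad_def using norm_triangle_ineq assms(1,2) by (simp add: norm_triangle_le)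
  ultimately have "norm (barrier_grad M mu L \<nu> x) \<le> (M + mu / 2) / L + 2 * M / L\<^sup>2 * L"
    by linarith
  then show ?thesis using \<open>0 < L\<close> by (simp add: power2_eq_square add_divide_distrib)
qed

lemma pucci_max_barrier_hessian_le:
  fixes \<nu> :: "real^'n"
  assumes "norm \<nu> = 1" "lam \<le> Lam" "0 \<le> M" "0 \<le> mu" "0 < L"
  shows "L\<^sup>2 * pucci_max lam Lam (axial_matrix \<nu> (- mu / L\<^sup>2) (2 * M / L\<^sup>2))
    \<le> 2 * Lam * (real CARD('n) - 1) * M - lam * mu"
proof -
  have "pucci_max lam Lam (axial_matrix \<nu> (- mu / L\<^sup>2) (2 * M / L\<^sup>2))
      \<le> Lam * (real CARD('n) - 1) * (2 * M / L\<^sup>2) + lam * (- mu / L\<^sup>2)"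
    using assms(3,4) by (intro pucci_max_axial_matrix_le[OF assms(1) _ _ assms(2)]) auto
  then have "L\<^sup>2 * pucci_max lam Lam (axial_matrix \<nu> (- mu / L\<^sup>2) (2 * M / L\<^sup>2))
      \<le> L\<^sup>2 * (Lam * (real CARD('n) - 1) * (2 * M / L\<^sup>2) + lam * (- mu / L\<^sup>2))"
    by (rule mult_left_mono) simp
  also have "\<dots> = 2 * Lam * (real CARD('n) - 1) * M - lam * mu"
    using assms(5) by (simp add: field_simps)
  finally show ?thesis .
qed

lemma barrier_strict_supersolution:
  fixes \<nu> v :: "real^'n"
  assumes "norm \<nu> = 1" "(x0,t0) \<in> cylQ \<nu> L" "lam \<le> Lam" "0 \<le> M" "0 \<le> mu"
    and drift: "norm v * L \<le> \<beta>"
    and dominant: "2 * M + 2 * Lam * (real CARD('n) - 1) * M + \<beta> * (3 * M + mu / 2) < lam * mu"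
  shows "\<exists>q p X. transpose X = X \<and> parabolic_superjet (barrier c0 M mu L \<nu>) Q x0 t0 q p X
    \<and> 0 < q - pucci_max lam Lam X - v \<bullet> p"
proof (intro exI conjI)
  have in_L: "0 < x0 \<bullet> \<nu>" "x0 \<bullet> \<nu> < L" "\<bar>t0\<bar> < L\<^sup>2" using assms(2) by (simp_all add: mem_cylQ)
  then have "0 < L" by simp
  let ?q = "2 * M * t0 / L^4" and ?p = "barrier_grad M mu L \<nu> x0"
    and ?X = "axial_matrix \<nu> (- mu / L\<^sup>2) (2 * M / L\<^sup>2)"
  show "transpose ?X = ?X" by (rule transpose_axial_matrix)
  show "parabolic_superjet (barrier c0 M mu L \<nu>) Q x0 t0 ?q ?p ?X"
    using barrier_expansion[OF assms(1) \<open>0 < L\<close>] assms(4)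
    by (intro parabolic_superjet_of_expansion[where m = "M / L^4"]) auto
  have "L\<^sup>2 * ?q = 2 * M * t0 / L\<^sup>2" using \<open>0 < L\<close> by (simp add: power2_eq_square power4_eq_xxxx)
  also have "\<dots> \<ge> - 2 * M"
  proof -
    have "M * (- L\<^sup>2) \<le> M * t0" using in_L(3) assms(4) by (intro mult_left_mono) auto
    then show ?thesis using \<open>0 < L\<close> by (simp add: pos_le_divide_eq)
  qed
  finally have time: "- 2 * M \<le> L\<^sup>2 * ?q" .
  have diffusion: "L\<^sup>2 * pucci_max lam Lam ?X \<le> 2 * Lam * (real CARD('n) - 1) * M - lam * mu"
    using assms(1,3-5) \<open>0 < L\<close> by (rule pucci_max_barrier_hessian_le)
  have "norm ?p * L \<le> 3 * M + mu / 2"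
    using norm_barrier_grad_le[OF assms(1,4,5,2)] \<open>0 < L\<close> by (simp add: le_divide_eq)
  then have "(norm v * L) * (norm ?p * L) \<le> \<beta> * (3 * M + mu / 2)"
    using drift \<open>0 < L\<close> by (intro mult_mono) (auto intro: order_trans[OF _ drift])
  moreover have "L\<^sup>2 * (v \<bullet> ?p) \<le> (norm v * L) * (norm ?p * L)"
    using norm_cauchy_schwarz[of v ?p] \<open>0 < L\<close> by (simp add: power2_eq_square mult_ac)
  ultimately have transport: "L\<^sup>2 * (v \<bullet> ?p) \<le> \<beta> * (3 * M + mu / 2)" by linarith
  have "0 < L\<^sup>2 * (?q - pucci_max lam Lam ?X - v \<bullet> ?p)"
    unfolding right_diff_distrib using time diffusion transport dominant by linarith
  then show "0 < ?q - pucci_max lam Lam ?X - v \<bullet> ?p"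
    by (simp add: zero_less_mult_iff)
qed

lemma norm_drift_le:
  fixes u :: "'a::real_normed_vector"
  assumes "norm u = 1" "\<bar>a1\<bar> \<le> K" "\<bar>a2\<bar> \<le> K" "0 < \<epsilon>" "\<bar>t\<bar> \<le> L\<^sup>2" "L * \<epsilon> \<le> 1" "0 < L"
  shows "norm ((\<epsilon> * a1 + \<epsilon>^3 * a2 * t) *\<^sub>R u) * L \<le> 2 * K * (L * \<epsilon>)"
proof -
  have "\<bar>\<epsilon>^3 * a2 * t\<bar> \<le> \<epsilon>^3 * K * L\<^sup>2"
    using assms(3-5) by (simp add: abs_mult mult_mono)
  also have "\<dots> = \<epsilon> * K * (L * \<epsilon>)\<^sup>2" by (simp add: power2_eq_square power3_eq_cube)
  also have "\<dots> \<le> \<epsilon> * K"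
    using assms(2,4,6,7) power_le_one[of "L * \<epsilon>" 2] by (simp add: mult_left_le)
  finally have cubic: "\<bar>\<epsilon>^3 * a2 * t\<bar> \<le> \<epsilon> * K" .
  have linear: "\<bar>\<epsilon> * a1\<bar> \<le> \<epsilon> * K" using assms(2,4) by (simp add: abs_mult)
  have "\<bar>\<epsilon> * a1 + \<epsilon>^3 * a2 * t\<bar> \<le> 2 * (\<epsilon> * K)"
    using abs_triangle_ineq[of "\<epsilon> * a1" "\<epsilon>^3 * a2 * t"] cubic linear by linarith
  then have "\<bar>\<epsilon> * a1 + \<epsilon>^3 * a2 * t\<bar> * L \<le> 2 * (\<epsilon> * K) * L"
    using assms(7) by (simp add: mult_right_mono)
  then show ?thesis using assms(1) by (simp add: mult_ac)
qed

lemma visc_sub_le_barrier: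
  fixes \<nu> :: "real^'n" and w :: "real^'n \<Rightarrow> real \<Rightarrow> real"
  assumes "norm \<nu> = 1" "lam \<le> Lam" "0 \<le> M" "0 \<le> mu"
    and dominant: "2 * M + 2 * Lam * (real CARD('n) - 1) * M + \<beta> * (3 * M + mu / 2) < lam * mu"
    and drift: "\<And>x t. (x,t) \<in> cylQ \<nu> L \<Longrightarrow> norm (b x t) * L \<le> \<beta>"
    and sub: "visc_sub lam Lam b w (cylQ \<nu> L)"
    and cont: "continuous_on (closure (cylQ \<nu> L)) (\<lambda>z. w (fst z) (snd z))"
    and flat: "\<forall>(x,t) \<in> closure (cylQ \<nu> L) \<inter> halfspace_bdry \<nu>. w x t \<le> c0"
    and rest: "\<forall>(x,t) \<in> closure (cylQ \<nu> L). w x t \<le> c0 + M"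
    and "(x,t) \<in> cylQ \<nu> L"
  shows "w x t \<le> barrier c0 M mu L \<nu> x t"
proof -
  have "0 < L" using \<open>(x,t) \<in> cylQ \<nu> L\<close> by (simp add: mem_cylQ)
  show ?thesis
  proof (rule visc_sub_le_strict_supersolution[OF sub bounded_cylQ cont _ _ _ \<open>(x,t) \<in> cylQ \<nu> L\<close>])
    show "continuous_on (closure (cylQ \<nu> L)) (\<lambda>z. barrier c0 M mu L \<nu> (fst z) (snd z))"
      unfolding barrier_def using \<open>0 < L\<close> by (intro continuous_intros) auto
  next
    fix y s assume "(y,s) \<in> closure (cylQ \<nu> L) - cylQ \<nu> L"
    moreover from this have "y \<bullet> \<nu> = 0 \<Longrightarrow> w y s \<le> c0" and "w y s \<le> c0 + M"
      using flat rest by (auto simp: halfspace_bdry_def)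
    ultimately show "w y s \<le> barrier c0 M mu L \<nu> y s"
      using assms(3,4) \<open>0 < L\<close> by (intro le_barrier_on_boundary)
  next
    fix x0 t0 assume "(x0,t0) \<in> cylQ \<nu> L"
    then show "\<exists>q p X. transpose X = X \<and> parabolic_superjet (barrier c0 M mu L \<nu>) (cylQ \<nu> L) x0 t0 q p X
        \<and> 0 < q - pucci_max lam Lam X - b x0 t0 \<bullet> p"
      using assms(1-4) drift dominant by (intro barrier_strict_supersolution)
  qed
qed

lemma cylQ_linear_decay:
  fixes \<nu> :: "real^'d" and w :: "real^'d \<Rightarrow> real \<Rightarrow> real"
  assumes "norm \<nu> = 1" "lam \<le> Lam" "0 \<le> M" "0 \<le> mu"
    and dominant: "2 * M + 2 * Lam * (real CARD('d) - 1) * M + 2 * K * (L * \<epsilon>) * (3 * M + mu / 2) < lam * mu"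
    and bounded_coeffs: "\<forall>x t. \<bar>c1 x t\<bar> \<le> K \<and> \<bar>c2 x t\<bar> \<le> K" and unit: "\<forall>x t. norm (\<xi> x t) = 1"
    and "\<epsilon> > 0" "0 < R" "R < L" "L * \<epsilon> \<le> 1"
    and cont: "continuous_on (closure (cylQ \<nu> L)) (\<lambda>z. w (fst z) (snd z))"
    and sub: "visc_sub lam Lam (\<lambda>x t. (\<epsilon> * c1 x t + \<epsilon>^3 * c2 x t * t) *\<^sub>R \<xi> x t) w (cylQ \<nu> L)"
    and flat: "\<forall>(x,t) \<in> closure (cylQ \<nu> L) \<inter> halfspace_bdry \<nu>. w x t \<le> c0"
    and rest: "\<forall>(x,t) \<in> closure (cylQ \<nu> L). w x t \<le> c0 + M"
    and "(x,t) \<in> cylQ \<nu> R"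
  shows "w x t \<le> c0 + (3 * M + mu / 2) * R / L"
proof -
  have "(x,t) \<in> cylQ \<nu> L" using cylQ_mono[of R L \<nu>] assms(9,10,16) by auto
  have drift: "norm ((\<epsilon> * c1 y s + \<epsilon>^3 * c2 y s * s) *\<^sub>R \<xi> y s) * L \<le> 2 * K * (L * \<epsilon>)"
    if "(y,s) \<in> cylQ \<nu> L" for y s
    using that bounded_coeffs unit assms(8,10,11) by (intro norm_drift_le) (auto simp: mem_cylQ)
  have "w x t \<le> barrier c0 M mu L \<nu> x t"
    by (rule visc_sub_le_barrier[OF assms(1-4) dominant drift sub cont flat rest \<open>(x,t) \<in> cylQ \<nu> L\<close>])
  also have "\<dots> \<le> c0 + (3 * M + mu / 2) * R / L"
    using assms(3,4,9,10,16) by (intro barrier_le_on_cylQ) auto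
  finally show ?thesis .
qed

theorem lemma3p3:
  fixes lam Lam c0 C0 K :: real
  assumes "0 < lam" and "lam < Lam" and "0 < c0" and "c0 < C0" and "0 \<le> K"
  shows "\<exists>c C. c > 0 \<and> C > 0 \<and>
    (\<forall>(\<nu>::real^'d) (c1::real^'d \<Rightarrow> real \<Rightarrow> real) (c2::real^'d \<Rightarrow> real \<Rightarrow> real)
       (\<xi>::real^'d \<Rightarrow> real \<Rightarrow> real^'d) (\<epsilon>::real) (L::real) (R::real)
       (w::real^'d \<Rightarrow> real \<Rightarrow> real).
      norm \<nu> = 1 \<and>
      continuous_on UNIV (\<lambda>z. c1 (fst z) (snd z)) \<and>
      continuous_on UNIV (\<lambda>z. c2 (fst z) (snd z)) \<and>
      (\<forall>x t. \<bar>c1 x t\<bar> \<le> K \<and> \<bar>c2 x t\<bar> \<le> K) \<and>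
      continuous_on UNIV (\<lambda>z. \<xi> (fst z) (snd z)) \<and>
      (\<forall>x t. norm (\<xi> x t) = 1) \<and>
      \<epsilon> > 0 \<and> 0 < R \<and> R < L \<and> L * \<epsilon> \<le> c \<and>
      continuous_on (closure (cylQ \<nu> L)) (\<lambda>z. w (fst z) (snd z)) \<and>
      visc_sub lam Lam (\<lambda>x t. (\<epsilon> * c1 x t + \<epsilon>^3 * c2 x t * t) *\<^sub>R \<xi> x t) w (cylQ \<nu> L) \<and>
      (\<forall>(x,t) \<in> closure (cylQ \<nu> L) \<inter> halfspace_bdry \<nu>. w x t \<le> c0) \<and>
      (\<forall>(x,t) \<in> closure (cylQ \<nu> L). w x t \<le> C0)
      \<longrightarrow> (\<forall>(x,t) \<in> cylQ \<nu> R. w x t \<le> c0 + C * R / L))"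
proof -
  define M where "M = C0 - c0"
  define mu where "mu = (2 + 2 * M + 2 * Lam * (real CARD('d) - 1) * M) / lam"
  define C where "C = 3 * M + mu / 2"
  define c where "c = 1 / (1 + 2 * K * C)"
  have "0 < M" "0 \<le> Lam * (real CARD('d) - 1) * M" using assms by (simp_all add: M_def)
  then have "0 < mu" using assms(1) by (simp add: mu_def)
  with \<open>0 < M\<close> have "0 < C" by (simp add: C_def)
  moreover have "0 \<le> 2 * K * C" using assms(5) \<open>0 < C\<close> by simp
  ultimately have "0 < c" "c \<le> 1" "2 * K * c * C < 2" by (auto simp: c_def field_simps)
  have dominant: "2 * M + 2 * Lam * (real CARD('d) - 1) * M + 2 * K * (L * \<epsilon>) * (3 * M + mu / 2) < lam * mu"
    if "L * \<epsilon> \<le> c" for L \<epsilon> :: real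
  proof -
    have "2 * K * (L * \<epsilon>) * C \<le> 2 * K * c * C"
      using that assms(5) \<open>0 < C\<close> by (simp add: mult_right_mono mult_left_mono)
    with \<open>2 * K * c * C < 2\<close> show ?thesis using assms(1) by (simp add: mu_def C_def)
  qed
  show ?thesis
    apply (rule exI[of _ c], rule exI[of _ C])
    apply (intro conjI allI impI \<open>0 < c\<close> \<open>0 < C\<close>)
    apply (elim conjE)
    apply clarify
    subgoal premises prems for \<nu> c1 c2 \<xi> \<epsilon> L R w x t
      unfolding C_def using prems dominant[OF prems(10)] \<open>c \<le> 1\<close> \<open>0 < M\<close> \<open>0 < mu\<close> assms
      by (intro cylQ_linear_decay[where K = K]) (auto simp: M_def)
    done
qed

end
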